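(* Let $a\in\mathbb Z_{>0}$, $b\in\mathbb Z$ with $a+b\ge1$. Let $z,q\in\mathbb C$, let $\alpha_1,\ldots,\alpha_m$ be words, and let $e_1,\ldots,e_m\in\mathbb Z_{\ge0}$. Then for every positive integer $k$, \[ S(k)=\sum_{n=1}^{k}z^n(an+b)^q\prod_{j=1}^{m}\mathcal H_{\alpha_j}(an+b)^{e_j} \] belongs to $\operatorname{span}_{\mathbb C}\{\mathcal H_\beta(ak+b)\}_\beta$, where $\beta$ ranges over words; i.e. $S(k)$ is a finite linear combination of generalized harmonic numbers with upper limit $ak+b$.
   Context: A letter is a pair $(r,s)\in\mathbb C^2$ and a word is a finite sequence of letters. For a word $\alpha=((r_1,s_1),\ldots,(r_d,s_d))$ and a positive integer $N$, \[ \mathcal H_{\alpha}(N)=\sum_{N\ge n_1>\cdots>n_d\ge1}\prod_{i=1}^{d}\frac{s_i^{n_i}}{n_i^{r_i}},\qquad \mathcal H_\emptyset(N)=1, \] with powers of positive integers defined by $n^r=\exp(r\log n)$ using the real logarithm (so $(an+b)^q$ uses the real logarithm of the positive integer $an+b$). *)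

theory Defs
  imports Complex_Main
begin

type_synonym letter = "complex \<times> complex"
type_synonym word = "letter list"

definition npow :: "nat \<Rightarrow> complex \<Rightarrow> complex" where
  "npow n r = exp (r * complex_of_real (ln (real n)))"

text \<open>Generalized harmonic number H_alpha(N); the sum over N >= n_1 > ... > n_d >= 1
  written recursively in the largest index n_1.\<close>
fun H :: "word \<Rightarrow> nat \<Rightarrow> complex" where
  "H [] N = 1"
| "H ((r, s) # \<alpha>) N = (\<Sum>n\<in>{1..N}. s ^ n / npow n r * H \<alpha> (n - 1))"

end

theory Submission
  imports Defs "HOL-Analysis.Analysis"
begin

(*
  The complex span of the functions H_beta is closed under products (the quasi-shuffle
  expansion of a product of two nested sums) and under twisted partial summation
  f |-> (M |-> sum_{N=1..M} mu^N N^q f(N)).  The restriction of the summation index to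
  the progression N = a n + b is removed by a roots-of-unity filter: the sequence equal to
  z^((N - b)/a) on that progression and to 0 off it is a linear combination of the
  geometric sequences mu^N, mu running over the a-th roots of z.  Hence S(k) is a
  combination of twisted partial sums up to a k + b, plus a constant that accounts for the
  terms of the progression below a + b.
*)

definition H_comb :: "(complex \<times> word) list \<Rightarrow> nat \<Rightarrow> complex" where
  "H_comb cs M = (\<Sum>(c, \<beta>)\<leftarrow>cs. c * H \<beta> M)"

definition H_span :: "(nat \<Rightarrow> complex) set" where
  "H_span = range H_comb"

lemma H_comb_Nil [simp]: "H_comb [] M = 0"
  by (simp add: H_comb_def)

lemma H_comb_Cons [simp]: "H_comb ((c, \<beta>) # cs) M = c * H \<beta> M + H_comb cs M"
  by (simp add: H_comb_def)

lemma H_comb_append: "H_comb (cs @ ds) M = H_comb cs M + H_comb ds M"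
  by (simp add: H_comb_def)

lemma H_comb_scale: "H_comb (map (\<lambda>(c, \<beta>). (d * c, \<beta>)) cs) M = d * H_comb cs M"
  by (induction cs) (auto simp: algebra_simps)

lemma H_in_span: "H \<beta> \<in> H_span"
proof -
  have "H \<beta> = H_comb [(1, \<beta>)]" by auto
  then show ?thesis unfolding H_span_def by blast
qed

lemma const_in_span: "(\<lambda>_. c) \<in> H_span"
proof -
  have "(\<lambda>_. c) = H_comb [(c, [])]" by auto
  then show ?thesis unfolding H_span_def by blast
qed

lemma H_span_add: "f \<in> H_span \<Longrightarrow> g \<in> H_span \<Longrightarrow> (\<lambda>M. f M + g M) \<in> H_span"
  unfolding H_span_def by (auto simp: image_iff fun_eq_iff H_comb_append[symmetric])

lemma H_span_scale: "f \<in> H_span \<Longrightarrow> (\<lambda>M. d * f M) \<in> H_span"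
  unfolding H_span_def by (auto simp: image_iff fun_eq_iff H_comb_scale[symmetric])

lemma H_span_sum: "(\<And>i. i \<in> I \<Longrightarrow> f i \<in> H_span) \<Longrightarrow> (\<lambda>M. \<Sum>i\<in>I. f i M) \<in> H_span"
  by (induction I rule: infinite_finite_induct) (auto intro: const_in_span H_span_add)

lemma H_span_linear_image:
  assumes add: "\<And>f g. L (\<lambda>M. f M + g M) = (\<lambda>M. L f M + L g M)"
    and scale: "\<And>c f. L (\<lambda>M. c * f M) = (\<lambda>M. c * L f M)"
    and on_H: "\<And>\<beta>. L (H \<beta>) \<in> H_span"
    and f: "f \<in> H_span"
  shows "L f \<in> H_span"
proof -
  obtain cs where "f = H_comb cs" using f unfolding H_span_def by blast
  moreover have "L (H_comb cs) \<in> H_span"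
  proof (induction cs)
    case Nil
    have "L (\<lambda>_. 0) = (\<lambda>_. 0)" using scale[of 0 "\<lambda>_. 0"] by simp
    then show ?case by (simp add: const_in_span)
  next
    case (Cons x cs)
    obtain c \<beta> where "x = (c, \<beta>)" by force
    then have "L (H_comb (x # cs)) = L (\<lambda>M. c * H \<beta> M + H_comb cs M)"
      by (intro arg_cong[where f = L]) (simp add: fun_eq_iff)
    also have "\<dots> = (\<lambda>M. c * L (H \<beta>) M + L (H_comb cs) M)"
      by (simp only: add scale)
    finally show ?case by (simp add: H_span_add H_span_scale on_H Cons.IH)
  qed
  ultimately show ?thesis by simp
qed

lemma npow_add: "npow N (r + r') = npow N r * npow N r'"
  unfolding npow_def by (simp add: distrib_right exp_add)

lemma npow_diff: "npow N (r - r') = npow N r / npow N r'"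
  unfolding npow_def by (simp add: left_diff_distrib exp_diff)

lemma npow_minus: "npow N (- r) = inverse (npow N r)"
  unfolding npow_def by (simp add: exp_minus)

lemma npow_nonzero [simp]: "npow N r \<noteq> 0"
  unfolding npow_def by simp

lemma H_Cons_recurrence:
  assumes "N \<ge> 1"
  shows "H ((r, s) # \<alpha>) N = H ((r, s) # \<alpha>) (N - 1) + s ^ N / npow N r * H \<alpha> (N - 1)"
proof -
  have "{1..N} = insert N {1..N - 1}" using assms by auto
  with assms show ?thesis unfolding H.simps(2) by (simp add: add.commute)
qed

lemma H_span_partial_sum_shift:
  assumes "f \<in> H_span"
  shows "(\<lambda>M. \<Sum>N=1..M. s ^ N / npow N r * f (N - 1)) \<in> H_span"
proof (rule H_span_linear_image[where L = "\<lambda>f M. \<Sum>N=1..M. s ^ N / npow N r * f (N - 1)"])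
  have "(\<lambda>M. \<Sum>N=1..M. s ^ N / npow N r * H \<beta> (N - 1)) = H ((r, s) # \<beta>)" for \<beta>
    by (rule ext) simp
  then show "(\<lambda>M. \<Sum>N=1..M. s ^ N / npow N r * H \<beta> (N - 1)) \<in> H_span" for \<beta>
    by (simp only: H_in_span)
qed (simp_all add: assms algebra_simps sum.distrib sum_distrib_left)

lemma sum_mult_sum_split_diagonal:
  fixes x y :: "nat \<Rightarrow> 'a :: comm_ring"
  shows "(\<Sum>N=1..M. x N) * (\<Sum>N=1..M. y N) =
    (\<Sum>N=1..M. x N * (\<Sum>i=1..N - 1. y i) + y N * (\<Sum>i=1..N - 1. x i) + x N * y N)"
proof (induction M)
  case (Suc M)
  have "{1..Suc M} = insert (Suc M) {1..M}" by auto
  then show ?case using Suc by (simp add: algebra_simps)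
qed simp

lemma H_mult_H_in_span: "(\<lambda>M. H \<alpha> M * H \<beta> M) \<in> H_span"
proof (induction \<alpha> arbitrary: \<beta>)
  case Nil
  then show ?case using H_in_span by simp
next
  case (Cons l \<alpha>)
  note IH_\<alpha> = Cons.IH
  obtain r s where l: "l = (r, s)" by force
  show ?case
  proof (induction \<beta>)
    case Nil
    then show ?case using H_in_span by simp
  next
    case (Cons l' \<beta>)
    obtain r' s' where l': "l' = (r', s')" by force
    have "(\<lambda>M. H (l # \<alpha>) M * H (l' # \<beta>) M) = (\<lambda>M.
            (\<Sum>N=1..M. s ^ N / npow N r * (H \<alpha> (N - 1) * H (l' # \<beta>) (N - 1)))
          + (\<Sum>N=1..M. s' ^ N / npow N r' * (H (l # \<alpha>) (N - 1) * H \<beta> (N - 1)))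
          + (\<Sum>N=1..M. (s * s') ^ N / npow N (r + r') * (H \<alpha> (N - 1) * H \<beta> (N - 1))))"
      unfolding l l' H.simps sum_mult_sum_split_diagonal sum.distrib[symmetric]
      by (intro ext sum.cong refl) (simp add: npow_add field_simps)
    also have "\<dots> \<in> H_span"
      by (intro H_span_add H_span_partial_sum_shift[OF IH_\<alpha>[of "l' # \<beta>"]]
          H_span_partial_sum_shift[OF Cons.IH] H_span_partial_sum_shift[OF IH_\<alpha>[of \<beta>]])
    finally show ?case .
  qed
qed

lemma H_span_mult:
  assumes f: "f \<in> H_span" and g: "g \<in> H_span"
  shows "(\<lambda>M. f M * g M) \<in> H_span"
proof -
  have "(\<lambda>M. H \<alpha> M * g M) \<in> H_span" for \<alpha>
    by (rule H_span_linear_image[where L = "\<lambda>h M. H \<alpha> M * h M", OF _ _ H_mult_H_in_span g])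
      (simp_all add: algebra_simps)
  then show ?thesis
    by (intro H_span_linear_image[where L = "\<lambda>h M. h M * g M", OF _ _ _ f])
      (simp_all add: algebra_simps)
qed

lemma H_span_power: "f \<in> H_span \<Longrightarrow> (\<lambda>M. f M ^ e) \<in> H_span"
  by (induction e) (simp_all add: const_in_span H_span_mult)

lemma H_span_prod: "(\<And>i. i \<in> I \<Longrightarrow> f i \<in> H_span) \<Longrightarrow> (\<lambda>M. \<Prod>i\<in>I. f i M) \<in> H_span"
  by (induction I rule: infinite_finite_induct) (simp_all add: const_in_span H_span_mult)

lemma H_span_weighted_partial_sum:
  assumes "f \<in> H_span"
  shows "(\<lambda>M. \<Sum>N=1..M. \<mu> ^ N * npow N q * f N) \<in> H_span"
proof (rule H_span_linear_image[where L = "\<lambda>f M. \<Sum>N=1..M. \<mu> ^ N * npow N q * f N",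
                                 OF _ _ _ assms])
  fix \<beta>
  show "(\<lambda>M. \<Sum>N=1..M. \<mu> ^ N * npow N q * H \<beta> N) \<in> H_span"
  proof (cases \<beta>)
    case Nil
    have "(\<lambda>M. \<Sum>N=1..M. \<mu> ^ N * npow N q * H \<beta> N) = H [(- q, \<mu>)]"
      by (rule ext) (simp add: Nil npow_minus divide_inverse)
    then show ?thesis by (simp only: H_in_span)
  next
    case (Cons l \<alpha>)
    obtain r s where l: "l = (r, s)" by force
    \<comment> \<open>peeling the top term off H_beta(N) leaves the defining sums of two longer words\<close>
    have "(\<lambda>M. \<Sum>N=1..M. \<mu> ^ N * npow N q * H \<beta> N)
            = (\<lambda>M. H ((- q, \<mu>) # \<beta>) M + H ((r - q, \<mu> * s) # \<alpha>) M)"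
      unfolding H.simps(2)[of "- q"] H.simps(2)[of "r - q"] sum.distrib[symmetric]
      by (intro ext sum.cong refl)
        (simp add: Cons l H_Cons_recurrence npow_minus npow_diff field_simps del: H.simps)
    then show ?thesis by (simp only: H_span_add H_in_span)
  qed
qed (simp_all add: algebra_simps sum.distrib sum_distrib_left)

lemma root_unity_power_int_eq_1_iff:
  fixes n :: nat and t :: int
  assumes "n > 0"
  shows "exp (2 * pi * \<i> / of_nat n) powi t = 1 \<longleftrightarrow> int n dvd t"
proof -
  define \<omega> where "\<omega> = exp (2 * pi * \<i> / of_nat n)"
  have "\<omega> ^ n = exp (of_nat n * (2 * pi * \<i> / of_nat n))"
    unfolding \<omega>_def by (rule exp_of_nat_mult[symmetric])
  then have \<omega>_n: "\<omega> ^ n = 1" using assms by simp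
  have \<omega>_nz: "\<omega> \<noteq> 0" unfolding \<omega>_def by simp
  define k where "k = nat (t mod int n)"
  have "\<omega> powi t = \<omega> powi (int n * (t div int n) + t mod int n)" by simp
  also have "\<dots> = (\<omega> powi int n) powi (t div int n) * \<omega> powi (t mod int n)"
    using \<omega>_nz by (simp only: power_int_add power_int_mult simp_thms)
  also have "\<dots> = \<omega> ^ k"
    using assms by (simp add: \<omega>_n power_int_nonneg_exp k_def)
  finally have "\<omega> powi t = \<omega> ^ k" .
  moreover have "\<omega> ^ k = 1 \<longleftrightarrow> n dvd k"
    using complex_root_unity_eq_1[of n k] assms
    unfolding \<omega>_def exp_of_nat_mult[symmetric] by (simp add: field_simps)
  ultimately have "\<omega> powi t = 1 \<longleftrightarrow> n dvd k" by simp
  also have "\<dots> \<longleftrightarrow> k = 0"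
  proof -
    have "k < n" using assms by (simp add: k_def nat_less_iff)
    then show ?thesis by (auto dest: dvd_imp_le)
  qed
  also have "\<dots> \<longleftrightarrow> int n dvd t"
  proof -
    have "t mod int n \<ge> 0" using assms by simp
    then show ?thesis by (auto simp: k_def dvd_eq_mod_eq_0)
  qed
  finally show ?thesis unfolding \<omega>_def .
qed

lemma sum_nth_roots_power_int:
  fixes w :: complex and n :: nat and t :: int
  assumes "n > 0" and "w \<noteq> 0"
  shows "(\<Sum>j<n. (w * exp (2 * pi * \<i> / of_nat n) ^ j) powi t)
           = (if int n dvd t then of_nat n * (w ^ n) powi (t div int n) else 0)"
proof -
  define \<omega> where "\<omega> = exp (2 * pi * \<i> / of_nat n)"
  define x where "x = \<omega> powi t"
  have "(\<Sum>j<n. (w * \<omega> ^ j) powi t) = w powi t * (\<Sum>j<n. x ^ j)"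
    by (simp add: sum_distrib_left power_int_mult_distrib power_int_power power_int_power'
        x_def mult.commute)
  also have "\<dots> = (if int n dvd t then of_nat n * (w ^ n) powi (t div int n) else 0)"
  proof (cases "int n dvd t")
    case True
    then have "x = 1" using root_unity_power_int_eq_1_iff[OF assms(1)] by (simp add: x_def \<omega>_def)
    moreover from True obtain d where "t = int n * d" by blast
    ultimately show ?thesis using assms by (simp add: power_int_mult)
  next
    case False
    then have "x \<noteq> 1" using root_unity_power_int_eq_1_iff[OF assms(1)] by (simp add: x_def \<omega>_def)
    moreover have "x ^ n = 1"
      using root_unity_power_int_eq_1_iff[OF assms(1), of "int n"]
      by (simp add: x_def \<omega>_def power_int_power' power_int_mult mult.commute[of t])
    ultimately show ?thesis using False by (simp add: sum_gp_strict)
  qed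
  finally show ?thesis unfolding \<omega>_def .
qed

lemma progression_indicator_geometric:
  fixes a b :: int and z :: complex
  assumes "a > 0" and "z \<noteq> 0"
  obtains c \<mu> :: "nat \<Rightarrow> complex" where
    "\<And>N. (\<Sum>j<nat a. c j * \<mu> j ^ N)
            = (if a dvd int N - b then z powi ((int N - b) div a) else 0)"
proof
  define n where "n = nat a"
  define w where "w = exp (Ln z / of_nat n)"
  define \<mu> where "\<mu> j = w * exp (2 * pi * \<i> / of_nat n) ^ j" for j
  have n: "n > 0" "int n = a" using assms(1) by (simp_all add: n_def)
  have "w ^ n = exp (of_nat n * (Ln z / of_nat n))" unfolding w_def by (rule exp_of_nat_mult[symmetric])
  then have w_n: "w ^ n = z" using n assms(2) by simp
  have \<mu>_nz: "\<mu> j \<noteq> 0" for j by (simp add: \<mu>_def w_def)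
  fix N :: nat
  have "\<mu> j powi (int N - b) = \<mu> j powi (- b) * \<mu> j ^ N" for j
    using power_int_add[of "\<mu> j" "- b" "int N"] \<mu>_nz by (simp add: add.commute)
  then have "(\<Sum>j<n. \<mu> j powi (- b) / of_nat n * \<mu> j ^ N)
               = (\<Sum>j<n. \<mu> j powi (int N - b)) / of_nat n"
    by (simp add: sum_divide_distrib)
  also have "\<dots> = (if a dvd int N - b then z powi ((int N - b) div a) else 0)"
    using sum_nth_roots_power_int[OF n(1), of w "int N - b"] n w_n by (simp add: \<mu>_def w_def)
  finally show "(\<Sum>j<nat a. \<mu> j powi (- b) / of_nat n * \<mu> j ^ N) = \<dots>" by (simp add: n_def)
qed

lemma progression_sum_eq_twisted_sums:
  fixes a b :: int and z :: complex and g :: "nat \<Rightarrow> complex"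
  assumes a: "a > 0" and ab: "a + b \<ge> 1"
  obtains c \<mu> :: "nat \<Rightarrow> complex" and D :: complex where
    "\<And>k. k \<ge> 1 \<Longrightarrow> (\<Sum>n=1..k. z ^ n * g (nat (a * int n + b)))
                      = (\<Sum>j<nat a. c j * (\<Sum>N=1..nat (a * int k + b). \<mu> j ^ N * g N)) + D"
proof (cases "z = 0")
  case True
  show ?thesis using True by (intro that[of "\<lambda>_. 0" "\<lambda>_. 0" 0]) (auto intro!: sum.neutral)
next
  case False
  obtain c \<mu> where T_eq: "\<And>N. (\<Sum>j<nat a. c j * \<mu> j ^ N)
                          = (if a dvd int N - b then z powi ((int N - b) div a) else 0)"
    using progression_indicator_geometric[OF a False] by blast
  define T where "T N = (\<Sum>j<nat a. c j * \<mu> j ^ N)" for N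
  define R where "R M = (\<Sum>N=1..M. T N * g N)" for M
  define S where "S k = (\<Sum>n=1..k. z ^ n * g (nat (a * int n + b)))" for k
  have R_eq: "R M = (\<Sum>j<nat a. c j * (\<Sum>N=1..M. \<mu> j ^ N * g N))" for M
    unfolding R_def T_def sum_distrib_left sum_distrib_right
    by (subst sum.swap) (simp add: mult.assoc)
  have R_step: "R (nat (a * int (Suc k) + b))
                  = R (nat (a * int k + b)) + z ^ Suc k * g (nat (a * int (Suc k) + b))"
    if "k \<ge> 1" for k
  proof -
    define m where "m = nat (a * int k + b)"
    have "a * int k \<ge> a" using that a by simp
    then have m: "int m = a * int k + b" using ab by (simp add: m_def)
    have next_m: "nat (a * int (Suc k) + b) = m + nat a" using m a by (simp add: algebra_simps)
    have T_mid: "T N = 0" if "N \<in> {m + 1..m + nat a} - {m + nat a}" for N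
    proof -
      have "0 < N - m" "N - m < nat a" using that by auto
      then have "\<not> nat a dvd N - m" by (auto dest: dvd_imp_le)
      then have "\<not> a dvd int (N - m)"
        using a by (metis int_dvd_int_iff nat_0_le order.strict_implies_order)
      moreover have "int N - b = a * int k + int (N - m)" using that m by auto
      ultimately show ?thesis by (simp add: T_def T_eq dvd_add_right_iff)
    qed
    have "int (m + nat a) - b = a * int (Suc k)" using m a by (simp add: algebra_simps)
    then have T_last: "T (m + nat a) = z ^ Suc k" using a by (simp add: T_def T_eq del: of_nat_Suc)
    have "R (m + nat a) = R m + (\<Sum>N=m + 1..m + nat a. T N * g N)"
      unfolding R_def by (rule sum.ub_add_nat) simp
    also have "(\<Sum>N=m + 1..m + nat a. T N * g N) = z ^ Suc k * g (m + nat a)"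
      using a T_mid T_last by (subst sum.mono_neutral_left[of _ "{m + nat a}", symmetric]) auto
    finally show ?thesis by (simp only: next_m m_def)
  qed
  define D where "D = S 1 - R (nat (a + b))"
  have S_eq: "S k = R (nat (a * int k + b)) + D" if "k \<ge> 1" for k
    using that
  proof (induction k rule: dec_induct)
    case (step k)
    then show ?case by (simp add: S_def R_step del: of_nat_Suc)
  qed (simp add: D_def)
  show ?thesis using that[of c \<mu> D] S_eq[unfolded S_def R_eq] by blast
qed

theorem theorem3p3:
  fixes a b :: int and z q :: complex and m :: nat
    and \<alpha> :: "nat \<Rightarrow> word" and e :: "nat \<Rightarrow> nat"
  assumes "a > 0" and "a + b \<ge> 1"
  shows "\<exists>cs :: (complex \<times> word) list. \<forall>k::nat. k \<ge> 1 \<longrightarrow>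
           (\<Sum>n=1..k. z ^ n * npow (nat (a * int n + b)) q *
              (\<Prod>j<m. H (\<alpha> j) (nat (a * int n + b)) ^ e j))
           = (\<Sum>(c, \<beta>)\<leftarrow>cs. c * H \<beta> (nat (a * int k + b)))"
proof -
  define f where "f N = (\<Prod>j<m. H (\<alpha> j) N ^ e j)" for N
  obtain c \<mu> D where sums: "\<And>k. k \<ge> 1 \<Longrightarrow>
      (\<Sum>n=1..k. z ^ n * (npow (nat (a * int n + b)) q * f (nat (a * int n + b))))
      = (\<Sum>j<nat a. c j * (\<Sum>N=1..nat (a * int k + b). \<mu> j ^ N * (npow N q * f N))) + D"
    using progression_sum_eq_twisted_sums[OF assms, of z "\<lambda>N. npow N q * f N"] by blast
  have "(\<lambda>M. (\<Sum>j<nat a. c j * (\<Sum>N=1..M. \<mu> j ^ N * npow N q * f N)) + D) \<in> H_span"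
    unfolding f_def
    by (intro H_span_add H_span_sum H_span_scale H_span_weighted_partial_sum H_span_prod
        H_span_power H_in_span const_in_span)
  then obtain cs where
    cs: "(\<lambda>M. (\<Sum>j<nat a. c j * (\<Sum>N=1..M. \<mu> j ^ N * npow N q * f N)) + D) = H_comb cs"
    unfolding H_span_def by blast
  show ?thesis
    using sums fun_cong[OF cs] by (intro exI[of _ cs]) (simp add: H_comb_def f_def mult.assoc)
qed

end
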